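(* Let $n,N\ge 2$ and $\varepsilon\ge1$ be integers with $\varepsilon/n\le 1/2$, let $\alpha<h(\varepsilon/n)$, and suppose $$N\le 2+2^{-\varepsilon}\left(\frac{1-\varepsilon/n}{\varepsilon/n}\right)^{\lceil\frac{\varepsilon+1}{2}\rceil}\left(\frac{1}{\sqrt{8\varepsilon(1-\varepsilon/n)}}-2^{-n\alpha}\right).$$ Let $v_1,\dots,v_N$ be independent uniform templates in $\mathbb{Z}_2^n$, let $W_0$ be the event that $d_{\mathcal H}(v_i,v_j)\le\varepsilon$ for some $i\ne j$, and for each $k$ let $v_k'$ be uniform in $\mathbb{Z}_2^n$ independent of everything else and $p_k=\mathbb{P}\left(v_k'\in\bigcup_{j\ne k}B_\varepsilon(v_j)\,\middle|\,\overline{W_0}\right)$. Suppose only $\ell$ of the $N$ users ($1\le \ell\le N$), say users $1,\dots,\ell$, are attackers, and let $p_w=1-\prod_{k=1}^{\ell}(1-p_k)$ and $m_{in}=\left\lceil\frac{-\ln 2}{\ln(1-p_w)}\right\rceil$ be the median number of rounds until at least one attacker successfully impersonates another user. Then $$m_{in}=\Omega\left(2^{n(1-h(\varepsilon/n))-2\log_2(N)-\log_2(\ell)}\right)\quad\text{and}\quad m_{in}=O\left(2^{n(1-h(\varepsilon/n)+\alpha)-\log_2(N)-\log_2(\ell)}\right).$$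
   Context: Templates lie in $\mathbb{Z}_2^n$ with Hamming distance $d_{\mathcal H}$; $B_\varepsilon(t)=\{y: d_{\mathcal H}(t,y)\le\varepsilon\}$. In each round, each attacking user $k$ draws a fresh uniform template $v_k'$ and tries to match another user's enrolled template within distance $\varepsilon$; rounds are independent. $h(x)=-x\log_2x-(1-x)\log_2(1-x)$ is the binary entropy function. *)

theory Defs
  imports "HOL-Probability.Probability"
begin

definition bin_entropy :: "real \<Rightarrow> real" where
  "bin_entropy x = - x * log 2 x - (1 - x) * log 2 (1 - x)"

text \<open>Templates: elements of Z_2^n, represented as boolean lists of length n.\<close>
definition templates :: "nat \<Rightarrow> bool list set" where
  "templates n = {xs. length xs = n}"

definition hamming :: "bool list \<Rightarrow> bool list \<Rightarrow> nat" where
  "hamming xs ys = card {i. i < length xs \<and> xs ! i \<noteq> ys ! i}"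

definition hball :: "nat \<Rightarrow> nat \<Rightarrow> bool list \<Rightarrow> bool list set" where
  "hball n eps t = {y \<in> templates n. hamming t y \<le> eps}"

definition enrolments :: "nat \<Rightarrow> nat \<Rightarrow> (nat \<Rightarrow> bool list) set" where
  "enrolments n N = PiE {1..N} (\<lambda>_. templates n)"

definition W0 :: "nat \<Rightarrow> nat \<Rightarrow> (nat \<Rightarrow> bool list) \<Rightarrow> bool" where
  "W0 N eps v = (\<exists>i\<in>{1..N}. \<exists>j\<in>{1..N}. i \<noteq> j \<and> hamming (v i) (v j) \<le> eps)"

definition joint_pmf :: "nat \<Rightarrow> nat \<Rightarrow> ((nat \<Rightarrow> bool list) \<times> bool list) pmf" where
  "joint_pmf n N = pmf_of_set (enrolments n N \<times> templates n)"

definition p_att :: "nat \<Rightarrow> nat \<Rightarrow> nat \<Rightarrow> nat \<Rightarrow> real" where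
  "p_att n N eps k =
     measure_pmf.prob (joint_pmf n N)
        {(v, w). \<not> W0 N eps v \<and> w \<in> (\<Union>j\<in>{1..N} - {k}. hball n eps (v j))}
     / measure_pmf.prob (joint_pmf n N) {(v, w). \<not> W0 N eps v}"

definition p_w :: "nat \<Rightarrow> nat \<Rightarrow> nat \<Rightarrow> nat \<Rightarrow> real" where
  "p_w n N eps l = 1 - (\<Prod>k\<in>{1..l}. 1 - p_att n N eps k)"

definition m_in :: "nat \<Rightarrow> nat \<Rightarrow> nat \<Rightarrow> nat \<Rightarrow> int" where
  "m_in n N eps l = \<lceil>- ln 2 / ln (1 - p_w n N eps l)\<rceil>"

end

theory Submission
  imports Defs
begin

text \<open>
  Let \<open>V\<close> be the volume of a Hamming ball of radius \<open>\<epsilon>\<close> and \<open>Q = (N - 1) V / 2^n\<close>.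
  Given that the enrolled templates are pairwise more than \<open>\<epsilon>\<close> apart, the success
  probability \<open>p\<^sub>k\<close> of one attacker is the average fraction of the space covered by the
  balls around the other \<open>N - 1\<close> templates. It is at most \<open>Q\<close> by the union bound and at
  least \<open>Q/5\<close> by the Bonferroni inequality, because two balls whose centres are more than
  \<open>\<epsilon>\<close> apart share only a fraction \<open>(4\<epsilon>/(n - \<epsilon>))^\<lceil>(\<epsilon>+1)/2\<rceil>\<close> of their volume, which the
  hypothesis on \<open>N\<close> makes small. The same hypothesis gives \<open>Q < 1\<close>, so separated enrolments
  exist, and \<open>N Q = O(1)\<close>. Hence \<open>p\<^sub>w\<close> lies between \<open>l Q / (5 + l Q)\<close> and \<open>l Q\<close>, and the
  median \<open>m\<^sub>i\<^sub>n\<close> of the geometric waiting time is of order \<open>1 / (l Q)\<close>.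

  Finally \<open>V \<le> 2^(n h(\<epsilon>/n)) \<le> 4 \<surd>(8\<epsilon>(1 - \<epsilon>/n)) V\<close>: the second inequality holds because
  the binomial distribution with parameter \<open>\<epsilon>/n\<close> puts mass \<open>3/4\<close> within two standard
  deviations of its mode \<open>\<epsilon>\<close> (Chebyshev). As \<open>N \<ge> 2\<close>, the hypothesis on \<open>N\<close> also forces
  \<open>\<surd>(8\<epsilon>(1 - \<epsilon>/n)) \<le> 2^(n \<alpha>)\<close>, which turns \<open>1 / (l Q)\<close> into the two stated powers of \<open>2\<close>.
\<close>

section \<open>Hamming balls\<close>

lemma templates_eq_lists: "templates n = {xs. set xs \<subseteq> UNIV \<and> length xs = n}"
  by (simp add: templates_def)

lemma finite_templates [simp]: "finite (templates n)"
  unfolding templates_eq_lists by (rule finite_lists_length_eq) simp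

lemma card_templates: "card (templates n) = 2 ^ n"
  using card_lists_length_eq[of "UNIV :: bool set" n] by (simp add: templates_eq_lists)

lemma templates_nonempty [simp]: "templates n \<noteq> {}"
  by (auto simp: templates_def intro: exI[of _ "replicate n False"])

definition diff_positions :: "bool list \<Rightarrow> bool list \<Rightarrow> nat set" where
  "diff_positions t y = {i. i < length t \<and> t ! i \<noteq> y ! i}"

lemma hamming_eq_card_diff_positions: "hamming t y = card (diff_positions t y)"
  by (simp add: hamming_def diff_positions_def)

lemma finite_diff_positions [simp]: "finite (diff_positions t y)"
  by (simp add: diff_positions_def)

lemma hamming_commute: "length t = length y \<Longrightarrow> hamming t y = hamming y t"
  unfolding hamming_eq_card_diff_positions diff_positions_def by metis

lemma bij_betw_diff_positions:
  assumes "t \<in> templates n"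
  shows "bij_betw (diff_positions t) (templates n) (Pow {0..<n})"
proof (rule bij_betw_imageI)
  have len: "length t = n"
    using assms by (simp add: templates_def)
  show "inj_on (diff_positions t) (templates n)"
  proof (rule inj_onI)
    fix y z assume y: "y \<in> templates n" and z: "z \<in> templates n"
      and eq: "diff_positions t y = diff_positions t z"
    show "y = z"
    proof (rule nth_equalityI)
      show "length y = length z"
        using y z by (simp add: templates_def)
      fix i assume "i < length y"
      then have "i < length t"
        using y len by (simp add: templates_def)
      then show "y ! i = z ! i"
        using eq by (auto simp: diff_positions_def set_eq_iff)
    qed
  qed
  show "diff_positions t ` templates n = Pow {0..<n}"
  proof
    show "diff_positions t ` templates n \<subseteq> Pow {0..<n}"
      using len by (auto simp: diff_positions_def)
    show "Pow {0..<n} \<subseteq> diff_positions t ` templates n"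
    proof
      fix D assume "D \<in> Pow {0..<n}"
      define y where "y = map (\<lambda>i. (i \<in> D) \<noteq> t ! i) [0..<n]"
      have "y \<in> templates n"
        by (simp add: y_def templates_def)
      moreover have "diff_positions t y = D"
        using \<open>D \<in> Pow {0..<n}\<close> len by (auto simp: y_def diff_positions_def)
      ultimately show "D \<in> diff_positions t ` templates n"
        by blast
    qed
  qed
qed

lemma card_templates_filter_diff_positions:
  assumes "t \<in> templates n"
  shows "card {y \<in> templates n. P (diff_positions t y)} = card {D \<in> Pow {0..<n}. P D}"
  by (rule bij_betw_same_card, rule bij_betw_Collect[OF bij_betw_diff_positions[OF assms]]) simp

definition ball_volume :: "nat \<Rightarrow> nat \<Rightarrow> nat" where
  "ball_volume n m = (\<Sum>i\<le>m. n choose i)"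

lemma binomial_le_ball_volume: "n choose m \<le> ball_volume n m"
  unfolding ball_volume_def by (rule member_le_sum) auto

lemma one_le_ball_volume: "1 \<le> ball_volume n m"
  using member_le_sum[of 0 "{..m}" "\<lambda>i. n choose i"] by (simp add: ball_volume_def)

lemma ball_volume_less_power:
  assumes "m < n"
  shows "ball_volume n m < 2 ^ n"
proof -
  have "ball_volume n m \<le> (\<Sum>i<n. n choose i)"
    unfolding ball_volume_def using assms by (intro sum_mono2) auto
  also have "\<dots> < (\<Sum>i\<le>n. n choose i)"
    by (simp add: lessThan_Suc_atMost[symmetric])
  finally show ?thesis
    by (simp add: choose_row_sum)
qed

lemma card_subsets_card_le: "card {D \<in> Pow {0..<n}. card D \<le> m} = ball_volume n m"
proof -
  have "{D \<in> Pow {0..<n}. card D \<le> m} = (\<Union>i\<le>m. {D. D \<subseteq> {0..<n} \<and> card D = i})"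
    by auto
  also have "card \<dots> = (\<Sum>i\<le>m. card {D. D \<subseteq> {0..<n} \<and> card D = i})"
    by (rule card_UN_disjoint) auto
  finally show ?thesis
    by (simp add: n_subsets ball_volume_def)
qed

lemma hball_subset_templates: "hball n m t \<subseteq> templates n"
  by (auto simp: hball_def)

lemma finite_hball [simp]: "finite (hball n m t)"
  using finite_subset[OF hball_subset_templates] by simp

lemma card_hball: "t \<in> templates n \<Longrightarrow> card (hball n m t) = ball_volume n m"
  unfolding hball_def hamming_eq_card_diff_positions
  using card_templates_filter_diff_positions[where P = "\<lambda>D. card D \<le> m"]
    card_subsets_card_le[of n m] by simp

text \<open>A point of both balls differs from \<open>u\<close> in at most \<open>m - d/2\<close> positions outside the
  \<open>d = hamming u w\<close> positions where \<open>u\<close> and \<open>w\<close> differ.\<close>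
lemma hball_inter_subset:
  assumes "u \<in> templates n" "w \<in> templates n"
  shows "hball n m u \<inter> hball n m w \<subseteq>
    {y \<in> templates n. 2 * card (diff_positions u y - diff_positions u w) + hamming u w \<le> 2 * m}"
    (is "_ \<subseteq> ?B")
proof
  fix y assume y: "y \<in> hball n m u \<inter> hball n m w"
  define S where "S = diff_positions u w"
  define D where "D = diff_positions u y"
  have "length u = n" "length w = n" "length y = n"
    using assms y by (auto simp: hball_def templates_def)
  then have "diff_positions w y = (S - D) \<union> (D - S)"
    by (auto simp: S_def D_def diff_positions_def)
  then have "card (diff_positions w y) = card (S - D) + card (D - S)"
    by (simp add: card_Un_disjoint S_def D_def Diff_Int_distrib2 Int_commute)
  moreover have "card D = card (D \<inter> S) + card (D - S)" "card S = card (S \<inter> D) + card (S - D)"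
    by (simp_all add: S_def D_def card_Int_Diff)
  moreover have "card D \<le> m" "card (diff_positions w y) \<le> m"
    using y by (simp_all add: hball_def hamming_eq_card_diff_positions D_def)
  ultimately have "2 * card (D - S) + hamming u w \<le> 2 * m"
    by (simp add: hamming_eq_card_diff_positions S_def Int_commute)
  then show "y \<in> ?B"
    using y by (simp add: D_def S_def hball_def)
qed

lemma hball_inter_eq_empty:
  assumes "u \<in> templates n" "w \<in> templates n" "2 * m < hamming u w"
  shows "hball n m u \<inter> hball n m w = {}"
  using hball_inter_subset[OF assms(1,2), of m] assms(3) by auto

lemma card_hball_inter_le:
  assumes u: "u \<in> templates n" and w: "w \<in> templates n"
  shows "card (hball n m u \<inter> hball n m w)
           \<le> 2 ^ hamming u w * ball_volume n ((2 * m - hamming u w) div 2)"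
proof -
  define S where "S = diff_positions u w"
  define d where "d = hamming u w"
  define b where "b = (2 * m - d) div 2"
  have card_S: "card S = d"
    by (simp add: S_def d_def hamming_eq_card_diff_positions)
  have "card (hball n m u \<inter> hball n m w)
      \<le> card {y \<in> templates n. 2 * card (diff_positions u y - S) + d \<le> 2 * m}"
    using hball_inter_subset[OF u w] by (intro card_mono) (auto simp: S_def d_def)
  also have "\<dots> = card {D \<in> Pow {0..<n}. 2 * card (D - S) + d \<le> 2 * m}"
    by (rule card_templates_filter_diff_positions[OF u])
  also have "\<dots> \<le> card (Pow S \<times> {E \<in> Pow {0..<n}. card E \<le> b})"
  proof (rule card_inj_on_le[where f = "\<lambda>D. (D \<inter> S, D - S)"])
    show "inj_on (\<lambda>D. (D \<inter> S, D - S)) {D \<in> Pow {0..<n}. 2 * card (D - S) + d \<le> 2 * m}"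
    proof (rule inj_onI)
      fix D E assume "(D \<inter> S, D - S) = (E \<inter> S, E - S)"
      then have "(D \<inter> S) \<union> (D - S) = (E \<inter> S) \<union> (E - S)"
        by simp
      then show "D = E"
        by (simp add: Int_Diff_Un)
    qed
  qed (auto simp: b_def S_def)
  also have "\<dots> = 2 ^ d * ball_volume n b"
    using card_subsets_card_le[of n b] card_S by (simp add: card_cartesian_product card_Pow S_def)
  finally show ?thesis
    by (simp add: b_def d_def)
qed

section \<open>The binomial distribution\<close>

lemma Suc_times_binomial_Suc: "Suc k * (n choose Suc k) = (n - k) * (n choose k)"
  by (metis binomial_absorption binomial_absorb_comp)

definition binomial_weight :: "nat \<Rightarrow> real \<Rightarrow> nat \<Rightarrow> real" where
  "binomial_weight n x j = real (n choose j) * x ^ j * (1 - x) ^ (n - j)"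

lemma binomial_weight_nonneg: "0 \<le> x \<Longrightarrow> x \<le> 1 \<Longrightarrow> 0 \<le> binomial_weight n x j"
  by (simp add: binomial_weight_def)

lemma sum_binomial_weight: "(\<Sum>j\<le>n. binomial_weight n x j) = 1"
  using binomial_ring[of x "1 - x" n] by (simp add: binomial_weight_def)

lemma sum_times_binomial_weight_Suc:
  "(\<Sum>j\<le>Suc n. real j * f j * binomial_weight (Suc n) x j)
     = real (Suc n) * x * (\<Sum>i\<le>n. f (Suc i) * binomial_weight n x i)"
proof -
  have shifted: "real (Suc i) * f (Suc i) * binomial_weight (Suc n) x (Suc i)
          = real (Suc n) * x * (f (Suc i) * binomial_weight n x i)" for i
  proof -
    have "real (Suc i) * real (Suc n choose Suc i) = real (Suc n) * real (n choose i)"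
      by (metis Suc_times_binomial of_nat_mult)
    then show ?thesis
      unfolding binomial_weight_def by simp
  qed
  have "(\<Sum>j\<le>Suc n. real j * f j * binomial_weight (Suc n) x j)
      = (\<Sum>i\<le>n. real (Suc i) * f (Suc i) * binomial_weight (Suc n) x (Suc i))"
    by (subst sum.atMost_Suc_shift) simp
  also have "\<dots> = (\<Sum>i\<le>n. real (Suc n) * x * (f (Suc i) * binomial_weight n x i))"
    by (rule sum.cong) (simp_all only: shifted)
  finally show ?thesis
    by (simp add: sum_distrib_left)
qed

lemma binomial_mean: "(\<Sum>j\<le>n. real j * binomial_weight n x j) = real n * x"
proof (cases n)
  case (Suc k)
  then show ?thesis
    using sum_times_binomial_weight_Suc[of "\<lambda>_. 1" k x] by (simp add: sum_binomial_weight)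
qed simp

lemma binomial_second_moment:
  "(\<Sum>j\<le>n. (real j)\<^sup>2 * binomial_weight n x j) = real n * x * (1 - x) + (real n * x)\<^sup>2"
proof (cases n)
  case (Suc k)
  have "(\<Sum>j\<le>n. (real j)\<^sup>2 * binomial_weight n x j)
      = real n * x * (\<Sum>i\<le>k. real (Suc i) * binomial_weight k x i)"
    using sum_times_binomial_weight_Suc[of real k x] Suc by (simp add: power2_eq_square mult.assoc)
  also have "\<dots> = real n * x * (real k * x + 1)"
    by (simp add: distrib_right sum.distrib binomial_mean sum_binomial_weight)
  finally show ?thesis
    using Suc by (simp add: power2_eq_square algebra_simps)
qed simp

lemma binomial_variance:
  "(\<Sum>j\<le>n. (real j - real n * x)\<^sup>2 * binomial_weight n x j) = real n * x * (1 - x)"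
proof -
  define c where "c = real n * x"
  have "(\<Sum>j\<le>n. (real j - c)\<^sup>2 * binomial_weight n x j)
      = (\<Sum>j\<le>n. (real j)\<^sup>2 * binomial_weight n x j - 2 * c * (real j * binomial_weight n x j)
                  + c\<^sup>2 * binomial_weight n x j)"
    by (intro sum.cong) (simp_all add: power2_diff algebra_simps)
  also have "\<dots> = (\<Sum>j\<le>n. (real j)\<^sup>2 * binomial_weight n x j)
        - 2 * c * (\<Sum>j\<le>n. real j * binomial_weight n x j) + c\<^sup>2 * (\<Sum>j\<le>n. binomial_weight n x j)"
    by (simp add: sum.distrib sum_subtractf sum_distrib_left)
  also have "\<dots> = real n * x * (1 - x)"
    using binomial_second_moment[of n x]
    by (simp add: c_def binomial_mean sum_binomial_weight power2_eq_square algebra_simps)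
  finally show ?thesis
    by (simp add: c_def)
qed

lemma binomial_chebyshev:
  assumes "0 \<le> x" "x \<le> 1" "0 < R"
  shows "(\<Sum>j | j \<le> n \<and> R < \<bar>real j - real n * x\<bar>. binomial_weight n x j)
           \<le> real n * x * (1 - x) / R\<^sup>2"
proof -
  have "(\<Sum>j | j \<le> n \<and> R < \<bar>real j - real n * x\<bar>. binomial_weight n x j)
      \<le> (\<Sum>j | j \<le> n \<and> R < \<bar>real j - real n * x\<bar>. (real j - real n * x)\<^sup>2 / R\<^sup>2 * binomial_weight n x j)"
  proof (rule sum_mono)
    fix j assume "j \<in> {j. j \<le> n \<and> R < \<bar>real j - real n * x\<bar>}"
    then have "R\<^sup>2 \<le> \<bar>real j - real n * x\<bar>\<^sup>2"
      using assms(3) by (intro power_mono) auto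
    then have "R\<^sup>2 \<le> (real j - real n * x)\<^sup>2"
      by simp
    then have "1 \<le> (real j - real n * x)\<^sup>2 / R\<^sup>2"
      using assms(3) by simp
    then show "binomial_weight n x j \<le> (real j - real n * x)\<^sup>2 / R\<^sup>2 * binomial_weight n x j"
      using mult_right_mono[OF _ binomial_weight_nonneg[OF assms(1,2)],
              of 1 "(real j - real n * x)\<^sup>2 / R\<^sup>2" n j] by simp
  qed
  also have "\<dots> \<le> (\<Sum>j\<le>n. (real j - real n * x)\<^sup>2 / R\<^sup>2 * binomial_weight n x j)"
    using binomial_weight_nonneg[OF assms(1,2)] by (intro sum_mono2) auto
  also have "\<dots> = (\<Sum>j\<le>n. (real j - real n * x)\<^sup>2 * binomial_weight n x j) / R\<^sup>2"
    unfolding sum_divide_distrib by (intro sum.cong) auto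
  also have "\<dots> = real n * x * (1 - x) / R\<^sup>2"
    by (simp only: binomial_variance)
  finally show ?thesis .
qed

lemma binomial_weight_Suc:
  "binomial_weight n x (Suc j) * (real (Suc j) * (1 - x))
     = binomial_weight n x j * (real (n - j) * x)"
proof (cases "j < n")
  case True
  have "real (Suc j) * real (n choose Suc j) = real (n - j) * real (n choose j)"
    by (metis Suc_times_binomial_Suc of_nat_mult)
  then have "real (Suc j) * real (n choose Suc j) * (x ^ j * x * ((1 - x) ^ (n - Suc j) * (1 - x)))
           = real (n - j) * real (n choose j) * (x ^ j * x * ((1 - x) ^ (n - Suc j) * (1 - x)))"
    by simp
  moreover have "(1 - x) ^ (n - j) = (1 - x) ^ (n - Suc j) * (1 - x)"
    using True by (metis Suc_diff_Suc power_Suc2)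
  ultimately show ?thesis
    unfolding binomial_weight_def by (simp add: mult_ac)
qed (simp add: binomial_weight_def)

lemma binomial_weight_Suc_mono:
  assumes "0 \<le> x" "x < 1"
  shows binomial_weight_le_Suc: "real (Suc i) * (1 - x) \<le> real (n - i) * x \<Longrightarrow>
           binomial_weight n x i \<le> binomial_weight n x (Suc i)"
    and binomial_weight_Suc_le: "real (n - i) * x \<le> real (Suc i) * (1 - x) \<Longrightarrow>
           binomial_weight n x (Suc i) \<le> binomial_weight n x i"
proof -
  have pos: "0 < real (Suc i) * (1 - x)"
    using assms by simp
  have nonneg: "0 \<le> binomial_weight n x i"
    using assms by (simp add: binomial_weight_nonneg)
  show "binomial_weight n x i \<le> binomial_weight n x (Suc i)"
    if "real (Suc i) * (1 - x) \<le> real (n - i) * x"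
  proof -
    have "binomial_weight n x i * (real (Suc i) * (1 - x)) \<le> binomial_weight n x i * (real (n - i) * x)"
      using that nonneg by (rule mult_left_mono)
    also have "\<dots> = binomial_weight n x (Suc i) * (real (Suc i) * (1 - x))"
      by (rule binomial_weight_Suc[symmetric])
    finally show ?thesis
      using pos by (rule mult_right_le_imp_le)
  qed
  show "binomial_weight n x (Suc i) \<le> binomial_weight n x i"
    if "real (n - i) * x \<le> real (Suc i) * (1 - x)"
  proof -
    have "binomial_weight n x (Suc i) * (real (Suc i) * (1 - x)) = binomial_weight n x i * (real (n - i) * x)"
      by (rule binomial_weight_Suc)
    also have "\<dots> \<le> binomial_weight n x i * (real (Suc i) * (1 - x))"
      using that nonneg by (rule mult_left_mono)
    finally show ?thesis
      using pos by (rule mult_right_le_imp_le)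
  qed
qed

lemma binomial_weight_le_mode:
  assumes "0 < m" "m < n" "j \<le> n"
  shows "binomial_weight n (real m / real n) j \<le> binomial_weight n (real m / real n) m"
proof -
  define x where "x = real m / real n"
  have x: "0 \<le> x" "x < 1" "real n * x = real m"
    using assms by (auto simp: x_def)
  have up: "binomial_weight n x j \<le> binomial_weight n x k" if "j \<le> k" "k \<le> m" for k
    using that
  proof (induction k rule: dec_induct)
    case (step i)
    have "real (Suc i) * (1 - x) \<le> real (n - i) * x"
      using step x assms by (simp add: of_nat_diff algebra_simps)
    then show ?case
      using step binomial_weight_le_Suc[OF x(1,2)] by fastforce
  qed simp
  have down: "binomial_weight n x k \<le> binomial_weight n x m" if "m \<le> k" "k \<le> n" for k
    using that
  proof (induction k rule: dec_induct)
    case (step i)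
    have "real (n - i) * x \<le> real (Suc i) * (1 - x)"
      using step x assms by (simp add: of_nat_diff algebra_simps)
    then show ?case
      using step binomial_weight_Suc_le[OF x(1,2)] by fastforce
  qed simp
  show ?thesis
    using up[of m] down[of j] assms by (cases "j \<le> m") (auto simp: x_def)
qed

definition entropy_volume :: "nat \<Rightarrow> nat \<Rightarrow> real" where
  "entropy_volume n m = 2 powr (real n * bin_entropy (real m / real n))"

lemma entropy_volume_eq:
  assumes "0 < m" "m < n"
  shows "entropy_volume n m = 1 / ((real m / real n) ^ m * (1 - real m / real n) ^ (n - m))"
proof -
  define x where "x = real m / real n"
  have x: "0 < x" "0 < 1 - x" "real n * x = real m" "real n * (1 - x) = real (n - m)"
    using assms by (auto simp: x_def of_nat_diff field_simps)
  have "log 2 (1 / (x ^ m * (1 - x) ^ (n - m))) = - (real m * log 2 x + real (n - m) * log 2 (1 - x))"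
    using x by (simp add: log_divide log_mult log_nat_power)
  also have "\<dots> = real n * bin_entropy x"
    unfolding bin_entropy_def x(3,4)[symmetric] by (simp add: algebra_simps)
  finally have "2 powr (real n * bin_entropy x) = 2 powr log 2 (1 / (x ^ m * (1 - x) ^ (n - m)))"
    by simp
  also have "\<dots> = 1 / (x ^ m * (1 - x) ^ (n - m))"
    using x by simp
  finally show ?thesis
    unfolding entropy_volume_def x_def .
qed

lemma powr_eq_if_log_eq:
  fixes b x e :: real
  assumes "0 < b" "b \<noteq> 1" "0 < x" "log b x = e"
  shows "b powr e = x"
  using assms by (simp flip: assms(4))

lemma powr_entropy_lower_eq:
  fixes N l :: real
  assumes "0 < N" "0 < l"
  shows "2 powr (real n * (1 - bin_entropy (real m / real n)) - 2 * log 2 N - log 2 l)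
           = 2 ^ n / (entropy_volume n m * N\<^sup>2 * l)"
  using assms
  by (intro powr_eq_if_log_eq)
     (simp_all add: entropy_volume_def log_divide log_mult log_nat_power algebra_simps)

lemma powr_entropy_upper_eq:
  fixes N l :: real
  assumes "0 < N" "0 < l"
  shows "2 powr (real n * (1 - bin_entropy (real m / real n) + \<alpha>) - log 2 N - log 2 l)
           = 2 ^ n * 2 powr (real n * \<alpha>) / (entropy_volume n m * N * l)"
  using assms
  by (intro powr_eq_if_log_eq)
     (simp_all add: entropy_volume_def log_divide log_mult log_nat_power algebra_simps)

lemma ball_volume_le_entropy_volume:
  assumes "0 < m" "2 * m \<le> n"
  shows "real (ball_volume n m) \<le> entropy_volume n m"
proof -
  define x where "x = real m / real n"
  have x: "0 < x" "x \<le> 1 - x"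
    using assms by (auto simp: x_def field_simps)
  have "x ^ m = x ^ i * x ^ (m - i)" if "i \<le> m" for i
    using that by (simp add: power_add[symmetric])
  then have "real (ball_volume n m) * (x ^ m * (1 - x) ^ (n - m))
      = (\<Sum>i\<le>m. real (n choose i) * (x ^ i * (x ^ (m - i) * (1 - x) ^ (n - m))))"
    unfolding ball_volume_def of_nat_sum sum_distrib_right by (intro sum.cong) auto
  also have "\<dots> \<le> (\<Sum>i\<le>m. real (n choose i) * (x ^ i * ((1 - x) ^ (m - i) * (1 - x) ^ (n - m))))"
    using x by (intro sum_mono mult_left_mono mult_right_mono power_mono) auto
  also have "\<dots> = (\<Sum>i\<le>m. binomial_weight n x i)"
    using assms by (intro sum.cong) (auto simp: binomial_weight_def power_add[symmetric])
  also have "\<dots> \<le> (\<Sum>i\<le>n. binomial_weight n x i)"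
    using assms x by (intro sum_mono2 binomial_weight_nonneg) auto
  finally have "real (ball_volume n m) * (x ^ m * (1 - x) ^ (n - m)) \<le> 1"
    by (simp add: sum_binomial_weight)
  moreover have "0 < x ^ m * (1 - x) ^ (n - m)"
    using x by simp
  ultimately show ?thesis
    using assms by (simp add: entropy_volume_eq x_def field_simps)
qed

lemma card_window_le:
  assumes "0 \<le> R"
  shows "real (card {j. j \<le> n \<and> \<bar>real j - real m\<bar> \<le> R}) \<le> 2 * R + 1"
proof -
  define f where "f = \<lfloor>R\<rfloor>"
  have "card {j. j \<le> n \<and> \<bar>real j - real m\<bar> \<le> R} \<le> card {-f..f}"
  proof (rule card_inj_on_le[where f = "\<lambda>j. int j - int m"])
    show "inj_on (\<lambda>j. int j - int m) {j. j \<le> n \<and> \<bar>real j - real m\<bar> \<le> R}"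
      by (rule inj_onI) simp
    show "(\<lambda>j. int j - int m) ` {j. j \<le> n \<and> \<bar>real j - real m\<bar> \<le> R} \<subseteq> {-f..f}"
    proof clarify
      fix j assume "\<bar>real j - real m\<bar> \<le> R"
      then have "real_of_int (int m - int j) \<le> R" "real_of_int (int j - int m) \<le> R"
        by auto
      then have "int m - int j \<le> f" "int j - int m \<le> f"
        unfolding f_def by (simp_all only: le_floor_iff)
      then show "int j - int m \<in> {-f..f}"
        by simp
    qed
  qed simp
  also have "\<dots> = nat (2 * f + 1)"
    by simp
  finally show ?thesis
    using assms by (simp add: f_def) linarith
qed

text \<open>Chebyshev's inequality leaves mass \<open>3/4\<close> within two standard deviations of the
  mode \<open>m\<close>, spread over at most \<open>4\<sigma> + 1\<close> weights, each at most the one at \<open>m\<close>.\<close>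
lemma binomial_weight_mode_ge:
  assumes "0 < m" "m < n"
  shows "3 / 4 \<le> (4 * sqrt (real m * (1 - real m / real n)) + 1) * binomial_weight n (real m / real n) m"
proof -
  define x where "x = real m / real n"
  define R where "R = 2 * sqrt (real m * (1 - real m / real n))"
  define F where "F = {j. j \<le> n \<and> \<bar>real j - real m\<bar> \<le> R}"
  have x: "0 < x" "x < 1" "real n * x = real m"
    using assms by (auto simp: x_def)
  have variance: "real n * x * (1 - x) = real m * (1 - real m / real n)"
    using assms by (simp add: x_def)
  have R: "0 < R" "R\<^sup>2 = 4 * (real n * x * (1 - x))"
    using assms unfolding variance by (simp_all add: R_def power_mult_distrib field_simps)
  have "{..n} = F \<union> {j. j \<le> n \<and> R < \<bar>real j - real n * x\<bar>}"
    unfolding x(3) F_def by auto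
  then have "1 = (\<Sum>j \<in> F \<union> {j. j \<le> n \<and> R < \<bar>real j - real n * x\<bar>}. binomial_weight n x j)"
    by (simp only: sum_binomial_weight flip: \<open>{..n} = _\<close>)
  also have "\<dots> = (\<Sum>j\<in>F. binomial_weight n x j)
      + (\<Sum>j | j \<le> n \<and> R < \<bar>real j - real n * x\<bar>. binomial_weight n x j)"
    by (rule sum.union_disjoint) (auto simp: F_def x(3))
  also have "(\<Sum>j | j \<le> n \<and> R < \<bar>real j - real n * x\<bar>. binomial_weight n x j)
      \<le> real n * x * (1 - x) / R\<^sup>2"
    using x R by (intro binomial_chebyshev) auto
  also have "\<dots> = 1 / 4"
    using x assms by (simp add: R(2))
  also have "(\<Sum>j\<in>F. binomial_weight n x j) \<le> (\<Sum>j\<in>F. binomial_weight n x m)"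
    using binomial_weight_le_mode[OF assms] by (intro sum_mono) (simp add: F_def x_def)
  also have "\<dots> \<le> (2 * R + 1) * binomial_weight n x m"
    using card_window_le[of R n m] R x
    by (simp add: F_def mult_right_mono binomial_weight_nonneg)
  finally have "3 / 4 \<le> (2 * R + 1) * binomial_weight n x m"
    by simp
  moreover have "2 * R + 1 = 4 * sqrt (real m * (1 - real m / real n)) + 1"
    unfolding R_def by simp
  ultimately show ?thesis
    by (simp only: x_def)
qed

lemma entropy_volume_le_binomial:
  assumes "0 < m" "2 * m \<le> n"
  shows "entropy_volume n m \<le> 4 * sqrt (8 * real m * (1 - real m / real n)) * real (n choose m)"
proof -
  define x where "x = real m / real n"
  define \<sigma> where "\<sigma> = real m * (1 - x)"
  define w where "w = binomial_weight n x m"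
  have x: "0 < x" "x \<le> 1 / 2"
    using assms by (auto simp: x_def field_simps)
  have \<sigma>: "1 * (1 / 2) \<le> \<sigma>"
    unfolding \<sigma>_def using assms x by (intro mult_mono) auto
  then have sqrt_\<sigma>: "1 / 2 \<le> sqrt \<sigma>"
    using real_sqrt_le_mono[of "1 / 4" \<sigma>] by (simp add: real_sqrt_divide)
  have w: "0 < w"
    using assms x by (simp add: w_def binomial_weight_def)
  have "3 / 4 \<le> (4 * sqrt \<sigma> + 1) * w"
    using binomial_weight_mode_ge[of m n] assms unfolding w_def \<sigma>_def x_def by simp
  also have "\<dots> \<le> 6 * sqrt \<sigma> * w"
    using sqrt_\<sigma> w by (intro mult_right_mono) auto
  finally have "1 / w \<le> 8 * sqrt \<sigma>"
    using w by (simp add: field_simps)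
  also have "\<dots> = 4 * (2 * sqrt \<sigma>)"
    by simp
  also have "\<dots> \<le> 4 * (sqrt 8 * sqrt \<sigma>)"
    using real_sqrt_le_mono[of 4 8] \<sigma> by (intro mult_left_mono mult_right_mono) auto
  also have "\<dots> = 4 * sqrt (8 * real m * (1 - real m / real n))"
    unfolding \<sigma>_def x_def real_sqrt_mult[symmetric] by (simp only: mult.assoc)
  finally have inverse_w: "1 / w \<le> 4 * sqrt (8 * real m * (1 - real m / real n))" .
  have "m < n" "real (n choose m) \<noteq> 0"
    using assms by auto
  then have "entropy_volume n m = 1 / (x ^ m * (1 - x) ^ (n - m))"
    by (simp only: x_def entropy_volume_eq[OF assms(1)])
  also have "\<dots> = 1 / w * real (n choose m)"
    using \<open>real (n choose m) \<noteq> 0\<close> by (simp add: w_def binomial_weight_def)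
  also have "\<dots> \<le> 4 * sqrt (8 * real m * (1 - real m / real n)) * real (n choose m)"
    using inverse_w by (rule mult_right_mono) simp
  finally show ?thesis .
qed

section \<open>Estimates of binomial sums\<close>

lemma binomial_le_ratio_Suc:
  assumes "Suc i \<le> m" "2 * m \<le> n"
  shows "real (n choose i) \<le> real m / real (n - m) * real (n choose Suc i)"
proof -
  have key: "real (n - m) * real (Suc i) \<le> real m * real (n - i)"
  proof -
    have "real n * (real i + 1) \<le> real n * real m"
      using assms by (intro mult_left_mono) auto
    then show ?thesis
      using assms by (simp add: of_nat_diff algebra_simps)
  qed
  have step: "real (Suc i) * real (n choose Suc i) = real (n - i) * real (n choose i)"
    by (metis Suc_times_binomial_Suc of_nat_mult)
  have "real (Suc i) * (real (n - m) * real (n choose i))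
      = (real (n - m) * real (Suc i)) * real (n choose i)"
    by (simp only: mult_ac)
  also have "\<dots> \<le> (real m * real (n - i)) * real (n choose i)"
    using key by (rule mult_right_mono) simp
  also have "\<dots> = real m * (real (Suc i) * real (n choose Suc i))"
    by (simp only: mult.assoc step)
  also have "\<dots> = real (Suc i) * (real m * real (n choose Suc i))"
    by (simp only: mult.left_commute)
  finally have "real (n - m) * real (n choose i) \<le> real m * real (n choose Suc i)"
    by (rule mult_left_le_imp_le) simp
  moreover have "0 < real (n - m)"
    using assms by simp
  ultimately show ?thesis
    by (simp add: field_simps)
qed

lemma ball_volume_diff_le:
  assumes "2 * m \<le> n" "j \<le> m"
  shows "real (ball_volume n (m - j)) \<le> (real m / real (n - m)) ^ j * real (ball_volume n m)"
  using assms(2)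
proof (induction j)
  case (Suc j)
  define r where "r = real m / real (n - m)"
  define b where "b = m - Suc j"
  have b: "Suc b \<le> m" "m - j = Suc b"
    using Suc.prems by (auto simp: b_def)
  have "real (ball_volume n b) = (\<Sum>i\<le>b. real (n choose i))"
    by (simp add: ball_volume_def)
  also have "\<dots> \<le> (\<Sum>i\<le>b. r * real (n choose Suc i))"
  proof (rule sum_mono)
    fix i assume "i \<in> {..b}"
    then show "real (n choose i) \<le> r * real (n choose Suc i)"
      unfolding r_def using b assms by (intro binomial_le_ratio_Suc) auto
  qed
  also have "\<dots> = r * (\<Sum>i\<le>b. real (n choose Suc i))"
    by (simp add: sum_distrib_left)
  also have "\<dots> \<le> r * (\<Sum>i\<le>Suc b. real (n choose i))"
    by (intro mult_left_mono) (simp_all add: r_def sum.atMost_Suc_shift del: sum.atMost_Suc)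
  also have "\<dots> = r * real (ball_volume n (m - j))"
    using b by (simp add: ball_volume_def)
  also have "\<dots> \<le> r * (r ^ j * real (ball_volume n m))"
    using Suc by (intro mult_left_mono) (simp_all add: r_def)
  finally show ?case
    by (simp add: b_def r_def mult.assoc)
qed simp

lemma card_hball_inter_le_far:
  assumes "2 * m \<le> n" "4 * (real m / real (n - m)) \<le> 1"
    and "u \<in> templates n" "w \<in> templates n" "m < hamming u w"
  shows "real (card (hball n m u \<inter> hball n m w))
           \<le> (4 * (real m / real (n - m))) ^ ((m + 2) div 2) * real (ball_volume n m)"
proof (cases "2 * m < hamming u w")
  case True
  then show ?thesis
    using hball_inter_eq_empty[OF assms(3,4)] by simp
next
  case False
  define r where "r = real m / real (n - m)"
  define d where "d = hamming u w"
  define j where "j = m - (2 * m - d) div 2"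
  have j: "(2 * m - d) div 2 = m - j" "j \<le> m" "d \<le> 2 * j" "(m + 2) div 2 \<le> j"
    using False assms(5) by (auto simp: j_def d_def)
  have "real (card (hball n m u \<inter> hball n m w)) \<le> 2 ^ d * real (ball_volume n (m - j))"
    using card_hball_inter_le[OF assms(3,4), of m] j(1) unfolding d_def
    by (metis of_nat_le_iff of_nat_mult of_nat_numeral of_nat_power)
  also have "\<dots> \<le> 2 ^ (2 * j) * (r ^ j * real (ball_volume n m))"
    using ball_volume_diff_le[OF assms(1) j(2)] j(3) unfolding r_def
    by (intro mult_mono power_increasing) auto
  also have "\<dots> = (4 * r) ^ j * real (ball_volume n m)"
    by (simp add: power_mult power_mult_distrib)
  also have "\<dots> \<le> (4 * r) ^ ((m + 2) div 2) * real (ball_volume n m)"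
    using assms(2) j(4) by (intro mult_right_mono power_decreasing) (auto simp: r_def)
  finally show ?thesis
    by (simp add: r_def)
qed

lemma binomial_add_ge_prod:
  assumes "i \<le> m" "m + K \<le> n"
  shows "real (n choose i) * (\<Prod>j<K. real (n - m - j) / real (m + j + 1)) \<le> real (n choose (i + K))"
  using assms(2)
proof (induction K)
  case (Suc K)
  have step: "real (Suc (i + K)) * real (n choose Suc (i + K)) = real (n - (i + K)) * real (n choose (i + K))"
    by (metis Suc_times_binomial_Suc of_nat_mult)
  have ratio: "real (n - m - K) / real (m + K + 1) \<le> real (n - (i + K)) / real (Suc (i + K))"
    using assms(1) by (intro frac_le) auto
  have "real (n choose i) * (\<Prod>j<Suc K. real (n - m - j) / real (m + j + 1))
      = real (n choose i) * (\<Prod>j<K. real (n - m - j) / real (m + j + 1)) * (real (n - m - K) / real (m + K + 1))"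
    by (simp add: mult.assoc)
  also have "\<dots> \<le> real (n choose (i + K)) * (real (n - (i + K)) / real (Suc (i + K)))"
    using Suc ratio by (intro mult_mono) auto
  also have "\<dots> = real (n choose (i + Suc K))"
    using step by (simp add: field_simps)
  finally show ?case .
qed simp

lemma prod_binomial_ratio_ge:
  assumes "1 \<le> k" "k \<le> m" "2 * k \<le> m + 2" "2 * m \<le> n"
  shows "2 * (real (n - m) / real m / 4) ^ k \<le> (\<Prod>j<k. real (n - m - j) / real (m + j + 1))"
proof -
  obtain k' where k': "k = Suc k'"
    using assms(1) by (cases k) auto
  define a where "a = real (n - m) / real m"
  have m: "0 < real m"
    using assms by simp
  have first: "a / 2 \<le> real (n - m) / real (m + 1)"
    unfolding a_def using assms by (simp add: frac_le)
  have later: "a / 4 \<le> real (n - m - Suc j) / real (m + Suc j + 1)" if "j < k'" for j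
  proof -
    have "real (m + Suc j + 1) \<le> 2 * real m" "real (n - m) \<le> 2 * real (n - m - Suc j)"
      using that k' assms by simp_all
    then have "real (n - m) * real (m + Suc j + 1) \<le> 2 * real (n - m - Suc j) * (2 * real m)"
      by (intro mult_mono) auto
    then show ?thesis
      using m by (simp add: a_def field_simps)
  qed
  have "(\<Prod>j<k'. a / 4) \<le> (\<Prod>j<k'. real (n - m - Suc j) / real (m + Suc j + 1))"
    using later by (intro prod_mono) (auto simp: a_def)
  then have "a / 2 * (a / 4) ^ k' \<le> real (n - m) / real (m + 1) * (\<Prod>j<k'. real (n - m - Suc j) / real (m + Suc j + 1))"
    using first by (intro mult_mono) (auto simp: a_def)
  also have "\<dots> = (\<Prod>j<k. real (n - m - j) / real (m + j + 1))"
    unfolding k' by (simp add: prod.lessThan_Suc_shift del: prod.lessThan_Suc)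
  finally show ?thesis
    by (simp add: a_def k')
qed

lemma binomial_add_ge:
  assumes "1 \<le> k" "k \<le> m" "2 * k \<le> m + 2" "m + k \<le> n" "2 * m \<le> n" "i \<le> m"
  shows "(real (n - m) / real m) ^ k / 2 ^ m * real (n choose i) \<le> 2 * real (n choose (i + k))"
proof -
  define a where "a = real (n - m) / real m"
  have "(4 :: real) ^ k \<le> 2 ^ (m + 2)"
    using assms(3) power_increasing[of "2 * k" "m + 2" "2 :: real"] by (simp add: power_mult)
  then have "a ^ k * 4 ^ k \<le> a ^ k * (4 * 2 ^ m)"
    by (intro mult_left_mono) (auto simp: a_def power_add)
  then have "a ^ k / 2 ^ m \<le> 4 * (a / 4) ^ k"
    by (simp add: power_divide field_simps)
  also have "\<dots> \<le> 2 * (\<Prod>j<k. real (n - m - j) / real (m + j + 1))"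
    using prod_binomial_ratio_ge[OF assms(1,2,3,5)] by (simp add: a_def)
  finally have "a ^ k / 2 ^ m * real (n choose i)
      \<le> 2 * (\<Prod>j<k. real (n - m - j) / real (m + j + 1)) * real (n choose i)"
    by (rule mult_right_mono) simp
  also have "\<dots> = 2 * (real (n choose i) * (\<Prod>j<k. real (n - m - j) / real (m + j + 1)))"
    by simp
  also have "\<dots> \<le> 2 * real (n choose (i + k))"
    using binomial_add_ge_prod[OF assms(6,4)] by simp
  finally show ?thesis
    by (simp add: a_def)
qed

text \<open>By symmetry the ball volume is the sum of \<open>n choose j\<close> over \<open>j = n - i\<close>, \<open>i \<le> m\<close>, and these
  indices are disjoint from the indices \<open>i + k\<close>.\<close>
lemma ball_volume_add_sum_binomial_le:
  assumes "2 * m + k < n"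
  shows "ball_volume n m + (\<Sum>i\<le>m. n choose (i + k)) \<le> 2 ^ n"
proof -
  have "ball_volume n m = (\<Sum>i\<le>m. n choose (n - i))"
    using assms by (simp add: ball_volume_def binomial_symmetric[symmetric])
  also have "\<dots> = (\<Sum>j\<in>(\<lambda>i. n - i) ` {..m}. n choose j)"
    using assms by (subst sum.reindex) (auto intro: inj_onI)
  finally have "ball_volume n m + (\<Sum>i\<le>m. n choose (i + k))
      = (\<Sum>j\<in>(\<lambda>i. n - i) ` {..m}. n choose j) + (\<Sum>j\<in>(\<lambda>i. i + k) ` {..m}. n choose j)"
    by (simp add: sum.reindex)
  also have "\<dots> = (\<Sum>j\<in>(\<lambda>i. n - i) ` {..m} \<union> (\<lambda>i. i + k) ` {..m}. n choose j)"
    using assms by (intro sum.union_disjoint[symmetric]) auto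
  also have "\<dots> \<le> (\<Sum>j\<le>n. n choose j)"
    using assms by (intro sum_mono2) auto
  finally show ?thesis
    by (simp add: choose_row_sum)
qed

lemma ball_volume_scaled_le:
  assumes "1 \<le> k" "k \<le> m" "2 * k \<le> m + 2" "2 * m + k < n"
  shows "(1 + (real (n - m) / real m) ^ k / 2 ^ m / 2) * real (ball_volume n m) \<le> 2 ^ n"
proof -
  define A where "A = (real (n - m) / real m) ^ k / 2 ^ m"
  have "(1 + A / 2) * real (ball_volume n m) = real (ball_volume n m) + (\<Sum>i\<le>m. A * real (n choose i) / 2)"
    by (simp add: ball_volume_def sum.distrib sum_distrib_left sum_divide_distrib algebra_simps)
  also have "\<dots> \<le> real (ball_volume n m) + (\<Sum>i\<le>m. real (n choose (i + k)))"
  proof (intro add_left_mono sum_mono)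
    fix i assume "i \<in> {..m}"
    then have "A * real (n choose i) \<le> 2 * real (n choose (i + k))"
      unfolding A_def using assms by (intro binomial_add_ge) auto
    then show "A * real (n choose i) / 2 \<le> real (n choose (i + k))"
      by simp
  qed
  also have "\<dots> = real (ball_volume n m + (\<Sum>i\<le>m. n choose (i + k)))"
    by simp
  also have "\<dots> \<le> 2 ^ n"
    using ball_volume_add_sum_binomial_le[OF assms(4)]
    by (metis of_nat_le_iff of_nat_numeral of_nat_power)
  finally show ?thesis
    by (simp add: A_def)
qed

lemma ball_volume_le_exp:
  assumes "m \<le> n"
  shows "real (ball_volume n m) \<le> 2 ^ m * (3 / 2) ^ n"
proof -
  have "real (ball_volume n m) \<le> (\<Sum>i\<le>m. 2 ^ m * (real (n choose i) * (1 / 2) ^ i * 1 ^ (n - i)))"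
    unfolding ball_volume_def of_nat_sum
  proof (rule sum_mono)
    fix i assume "i \<in> {..m}"
    then have "(2 :: real) ^ i \<le> 2 ^ m"
      by (intro power_increasing) auto
    then show "real (n choose i) \<le> 2 ^ m * (real (n choose i) * (1 / 2) ^ i * 1 ^ (n - i))"
      by (simp add: field_simps mult_left_mono)
  qed
  also have "\<dots> \<le> 2 ^ m * (\<Sum>i\<le>n. real (n choose i) * (1 / 2) ^ i * 1 ^ (n - i))"
    using assms by (simp add: sum_distrib_left[symmetric] sum_mono2)
  also have "\<dots> = 2 ^ m * (3 / 2) ^ n"
    using binomial_ring[of "1 / 2 :: real" 1 n] by simp
  finally show ?thesis .
qed

lemma linear_times_exp_le: "0 \<le> (a :: real) \<Longrightarrow> 3 * a / 8 * exp (- a / 4) \<le> 1"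
proof -
  assume "0 \<le> a"
  then have "(1 + a / 8) ^ 2 \<le> exp (a / 8) ^ 2"
    using exp_ge_add_one_self[of "a / 8"] by (intro power_mono) auto
  also have "exp (a / 8) ^ 2 = exp (a / 4)"
    by (simp add: exp_of_nat_mult[symmetric])
  finally have "(1 + a / 8) ^ 2 \<le> exp (a / 4)" .
  moreover have "3 * a \<le> 8 * (1 + a / 8) ^ 2"
    using sum_power2_ge_zero[of "a - 4" 0] by (simp add: power2_eq_square field_simps)
  ultimately show ?thesis
    by (simp add: exp_minus field_simps)
qed

lemma cube_times_exp_le: "0 \<le> (a :: real) \<Longrightarrow> 3 * a ^ 3 / 8 * exp (- a / 4) \<le> 648"
proof -
  assume "0 \<le> a"
  moreover have "a / 12 \<le> exp (a / 12)"
    using exp_ge_add_one_self[of "a / 12"] by linarith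
  ultimately have "(a / 12) ^ 3 \<le> exp (a / 12) ^ 3"
    by (intro power_mono) auto
  also have "exp (a / 12) ^ 3 = exp (a / 4)"
    by (simp add: exp_of_nat_mult[symmetric])
  finally show ?thesis
    by (simp add: exp_minus power_divide field_simps)
qed

lemma power_three_quarters_le_exp: "(3 / 4 :: real) ^ j \<le> exp (- real j / 4)"
proof -
  have "(3 / 4 :: real) ^ j \<le> exp (- 1 / 4) ^ j"
    using exp_ge_add_one_self[of "- 1 / 4 :: real"] by (intro power_mono) auto
  then show ?thesis
    by (simp flip: exp_of_nat_mult)
qed

text \<open>With \<open>a = (n - m)/m\<close> we have \<open>n = m (1 + a)\<close>, so \<open>V \<le> 2^m (3/2)^n\<close> gives
  \<open>(a^k / 2^m)\<^sup>2 V / 2^n \<le> a\<^sup>2 g^m\<close> with \<open>g = (3a/8) (3/4)^a \<le> (3a/8) e^(-a/4) \<le> 1\<close>.\<close>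
lemma ball_volume_square_scaled_le:
  assumes "1 \<le> m" "2 * m \<le> n" "2 * k \<le> m + 2"
  shows "((real (n - m) / real m) ^ k / 2 ^ m)\<^sup>2 * real (ball_volume n m) \<le> 648 * 2 ^ n"
proof -
  define a where "a = real (n - m) / real m"
  define g where "g = 3 * a / 8 * exp (- a / 4)"
  have a: "1 \<le> a" "real m * a = real (n - m)"
    using assms by (simp_all add: a_def field_simps)
  have g: "0 \<le> g" "g \<le> 1" "a\<^sup>2 * g \<le> 648"
    using a linear_times_exp_le[of a] cube_times_exp_le[of a]
    by (simp_all add: g_def power2_eq_square power3_eq_cube mult_ac)
  have "(4 :: real) ^ m = (2 ^ m)\<^sup>2"
    by (simp add: power2_eq_square flip: power_mult_distrib)
  then have "(a ^ k / 2 ^ m)\<^sup>2 = a ^ (k * 2) / 4 ^ m"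
    by (simp only: power_divide power_mult)
  also have "\<dots> \<le> a ^ (m + 2) / 4 ^ m"
    using a assms by (intro divide_right_mono power_increasing) auto
  finally have "(a ^ k / 2 ^ m)\<^sup>2 * real (ball_volume n m) \<le> a ^ (m + 2) / 4 ^ m * (2 ^ m * (3 / 2) ^ n)"
    using ball_volume_le_exp[of m n] assms a by (intro mult_mono) auto
  also have "\<dots> = 2 ^ n * a\<^sup>2 * ((a / 2) ^ m * (3 / 4) ^ m * (3 / 4) ^ (n - m))"
  proof -
    have "(3 / 2 :: real) ^ n = 2 ^ n * (3 / 4) ^ n"
      by (simp flip: power_mult_distrib)
    moreover have "(3 / 4 :: real) ^ n = (3 / 4) ^ m * (3 / 4) ^ (n - m)"
      using assms by (simp flip: power_add)
    moreover have "(4 :: real) ^ m = 2 ^ m * 2 ^ m"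
      by (simp flip: power_mult_distrib)
    ultimately show ?thesis
      by (simp add: power_add power_divide field_simps power2_eq_square)
  qed
  also have "\<dots> \<le> 2 ^ n * a\<^sup>2 * ((a / 2) ^ m * (3 / 4) ^ m * exp (- a / 4) ^ m)"
    using power_three_quarters_le_exp[of "n - m"] a
    by (intro mult_left_mono) (auto simp flip: exp_of_nat_mult)
  also have "\<dots> = 2 ^ n * a\<^sup>2 * g ^ m"
  proof -
    have "a / 2 * (3 / 4) * exp (- a / 4) = g"
      by (simp add: g_def)
    then show ?thesis
      by (simp only: power_mult_distrib[symmetric])
  qed
  also have "\<dots> \<le> 2 ^ n * (a\<^sup>2 * g)"
    using g assms power_decreasing[of 1 m g] by (simp add: mult_left_mono)
  also have "\<dots> \<le> 2 ^ n * 648"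
    using g by simp
  finally show ?thesis
    by (simp add: a_def mult.commute)
qed

section \<open>Balls of the other users\<close>

lemma card_UN_ge_Bonferroni:
  assumes "finite J"
    and "\<And>j. j \<in> J \<Longrightarrow> finite (B j)"
    and "\<And>j. j \<in> J \<Longrightarrow> real (card (B j)) = V"
    and "\<And>i j. i \<in> J \<Longrightarrow> j \<in> J \<Longrightarrow> i \<noteq> j \<Longrightarrow> real (card (B i \<inter> B j)) \<le> I"
  shows "real (card J) * V - real (card J) * (real (card J) - 1) / 2 * I \<le> real (card (\<Union>j\<in>J. B j))"
  using assms
proof (induction J rule: finite_induct)
  case (insert a F)
  define U where "U = (\<Union>j\<in>F. B j)"
  have fin: "finite (B a)" "finite U"
    using insert by (auto simp: U_def)
  have "real (card (B a \<inter> U)) \<le> (\<Sum>j\<in>F. real (card (B a \<inter> B j)))"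
    unfolding U_def Int_UN_distrib of_nat_sum[symmetric] of_nat_le_iff
    using insert.hyps(1) by (rule card_UN_le)
  also have "\<dots> \<le> (\<Sum>j\<in>F. I)"
    using insert.prems(3) insert.hyps(2) by (intro sum_mono) auto
  also have "\<dots> = real (card F) * I"
    by simp
  finally have "real (card (B a \<inter> U)) \<le> real (card F) * I" .
  moreover have "real (card (B a \<union> U)) = V + real (card U) - real (card (B a \<inter> U))"
    using card_Un_Int[OF fin] insert.prems(2)[of a] by simp
  moreover have "real (card F) * V - real (card F) * (real (card F) - 1) / 2 * I \<le> real (card U)"
    using insert by (simp add: U_def)
  moreover have "real (card (insert a F)) * V
        - real (card (insert a F)) * (real (card (insert a F)) - 1) / 2 * I
      = V + (real (card F) * V - real (card F) * (real (card F) - 1) / 2 * I) - real (card F) * I"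
    using insert.hyps by (simp add: field_simps)
  ultimately have "real (card (insert a F)) * V
        - real (card (insert a F)) * (real (card (insert a F)) - 1) / 2 * I \<le> real (card (B a \<union> U))"
    by linarith
  then show ?case
    by (simp add: U_def)
qed simp

definition others_cover :: "nat \<Rightarrow> nat \<Rightarrow> nat \<Rightarrow> nat \<Rightarrow> (nat \<Rightarrow> bool list) \<Rightarrow> bool list set" where
  "others_cover n N m k v = (\<Union>j\<in>{1..N} - {k}. hball n m (v j))"

definition separated :: "nat \<Rightarrow> nat \<Rightarrow> nat \<Rightarrow> (nat \<Rightarrow> bool list) set" where
  "separated n N m = {v \<in> enrolments n N. \<not> W0 N m v}"

lemma enrolments_templates: "v \<in> enrolments n N \<Longrightarrow> j \<in> {1..N} \<Longrightarrow> v j \<in> templates n"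
  by (auto simp: enrolments_def PiE_iff)

lemma finite_enrolments: "finite (enrolments n N)"
  by (simp add: enrolments_def finite_PiE)

lemma others_cover_subset_templates: "others_cover n N m k v \<subseteq> templates n"
  using hball_subset_templates by (auto simp: others_cover_def)

lemma finite_others_cover [simp]: "finite (others_cover n N m k v)"
  using finite_subset[OF others_cover_subset_templates] by simp

lemma p_att_eq_average:
  "p_att n N m k = (\<Sum>v\<in>separated n N m. real (card (others_cover n N m k v)))
                     / (real (card (separated n N m)) * 2 ^ n)"
proof -
  define E where "E = enrolments n N \<times> templates n"
  have E: "finite E" "E \<noteq> {}"
    using finite_enrolments by (auto simp: E_def enrolments_def PiE_eq_empty_iff)
  have "E \<inter> {(v, w). \<not> W0 N m v} = separated n N m \<times> templates n"
    by (auto simp: E_def separated_def)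
  moreover have "E \<inter> {(v, w). \<not> W0 N m v \<and> w \<in> (\<Union>j\<in>{1..N} - {k}. hball n m (v j))}
       = Sigma (separated n N m) (others_cover n N m k)"
    by (auto simp: E_def separated_def others_cover_def hball_def)
       (meson DiffI atLeastAtMost_iff singletonD)
  moreover have "card (Sigma (separated n N m) (others_cover n N m k))
      = (\<Sum>v\<in>separated n N m. card (others_cover n N m k v))"
    using finite_enrolments by (simp add: card_SigmaI separated_def)
  ultimately have "p_att n N m k = (\<Sum>v\<in>separated n N m. real (card (others_cover n N m k v))) / real (card E)
      / (real (card (separated n N m) * 2 ^ n) / real (card E))"
    unfolding p_att_def joint_pmf_def E_def[symmetric]
    using E by (simp add: measure_pmf_of_set card_cartesian_product card_templates)
  then show ?thesis
    using E by (simp add: card_gt_0_iff)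
qed

lemma card_others_cover_le:
  assumes "v \<in> enrolments n N" "k \<in> {1..N}"
  shows "card (others_cover n N m k v) \<le> (N - 1) * ball_volume n m"
proof -
  have "card (others_cover n N m k v) \<le> (\<Sum>j\<in>{1..N} - {k}. card (hball n m (v j)))"
    unfolding others_cover_def by (rule card_UN_le) simp
  also have "\<dots> = (N - 1) * ball_volume n m"
    using assms by (simp add: card_hball enrolments_templates)
  finally show ?thesis .
qed

lemma ball_volume_le_card_others_cover:
  assumes "v \<in> enrolments n N" "k \<in> {1..N}" "2 \<le> N"
  shows "ball_volume n m \<le> card (others_cover n N m k v)"
proof -
  define j where "j = (if k = 1 then 2 else 1 :: nat)"
  have j: "j \<in> {1..N} - {k}"
    using assms by (auto simp: j_def)
  then have "hball n m (v j) \<subseteq> others_cover n N m k v"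
    by (auto simp: others_cover_def)
  then have "card (hball n m (v j)) \<le> card (others_cover n N m k v)"
    by (rule card_mono[OF finite_others_cover])
  moreover have "card (hball n m (v j)) = ball_volume n m"
    using j assms(1) by (simp add: card_hball enrolments_templates)
  ultimately show ?thesis
    by simp
qed

lemma card_others_cover_ge_Bonferroni:
  assumes "v \<in> separated n N m" "k \<in> {1..N}"
    and "\<And>u w. u \<in> templates n \<Longrightarrow> w \<in> templates n \<Longrightarrow> m < hamming u w \<Longrightarrow>
           real (card (hball n m u \<inter> hball n m w)) \<le> I"
  shows "(real N - 1) * real (ball_volume n m) - (real N - 1) * (real N - 2) / 2 * I
           \<le> real (card (others_cover n N m k v))"
proof -
  have v: "v \<in> enrolments n N" "\<not> W0 N m v"
    using assms(1) by (auto simp: separated_def)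
  have card: "real (card ({1..N} - {k})) = real N - 1"
    using assms(2) by (simp add: of_nat_diff)
  have "real (card ({1..N} - {k})) * real (ball_volume n m)
      - real (card ({1..N} - {k})) * (real (card ({1..N} - {k})) - 1) / 2 * I
      \<le> real (card (others_cover n N m k v))"
    unfolding others_cover_def
  proof (rule card_UN_ge_Bonferroni)
    fix i j assume "i \<in> {1..N} - {k}" "j \<in> {1..N} - {k}" "i \<noteq> j"
    moreover from this have "\<not> hamming (v i) (v j) \<le> m"
      using v(2) unfolding W0_def by blast
    ultimately show "real (card (hball n m (v i) \<inter> hball n m (v j))) \<le> I"
      using v(1) by (intro assms(3)) (auto simp: enrolments_templates)
  qed (use v in \<open>auto simp: card_hball enrolments_templates\<close>)
  moreover have "real N - 1 - 1 = real N - 2"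
    by simp
  ultimately show ?thesis
    unfolding card by simp
qed

lemma W0_extend:
  assumes "W0 (Suc N) m (v(Suc N := y))"
  shows "W0 N m v \<or> (\<exists>j\<in>{1..N}. hamming (v j) y \<le> m \<or> hamming y (v j) \<le> m)"
proof -
  obtain i j where "i \<in> {1..Suc N}" "j \<in> {1..Suc N}" "i \<noteq> j"
    and "hamming ((v(Suc N := y)) i) ((v(Suc N := y)) j) \<le> m"
    using assms unfolding W0_def by blast
  then show ?thesis
    unfolding W0_def by (cases "i = Suc N"; cases "j = Suc N") (auto simp: le_Suc_eq, force)
qed

lemma exists_template_outside_hballs:
  assumes "finite J" "card J * ball_volume n m < 2 ^ n" "\<And>j. j \<in> J \<Longrightarrow> c j \<in> templates n"
  obtains y where "y \<in> templates n" "\<And>j. j \<in> J \<Longrightarrow> y \<notin> hball n m (c j)"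
proof -
  have "card (\<Union>j\<in>J. hball n m (c j)) \<le> (\<Sum>j\<in>J. card (hball n m (c j)))"
    using assms(1) by (rule card_UN_le)
  also have "\<dots> = card J * ball_volume n m"
    using assms(3) by (simp add: card_hball)
  finally have "card (\<Union>j\<in>J. hball n m (c j)) < card (templates n)"
    using assms(2) by (simp add: card_templates)
  then have "\<not> templates n \<subseteq> (\<Union>j\<in>J. hball n m (c j))"
    using assms(1) by (meson card_mono finite_UN_I finite_hball leD)
  then show ?thesis
    using that by blast
qed

text \<open>Greedy construction: a template outside the balls around the templates of \<open>N\<close>
  separated users can be enrolled for a further user.\<close>
lemma separated_nonempty:
  assumes "(N - 1) * ball_volume n m < 2 ^ n"
  shows "separated n N m \<noteq> {}"
  using assms
proof (induction N)
  case 0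
  have "(\<lambda>_. undefined) \<in> separated n 0 m"
    by (simp add: separated_def enrolments_def W0_def)
  then show ?case
    by blast
next
  case (Suc N)
  have "(N - 1) * ball_volume n m \<le> (Suc N - 1) * ball_volume n m"
    by simp
  then have "(N - 1) * ball_volume n m < 2 ^ n"
    using Suc.prems by linarith
  then obtain v where v: "v \<in> enrolments n N" "\<not> W0 N m v"
    using Suc.IH by (auto simp: separated_def)
  obtain y where y: "y \<in> templates n" "\<And>j. j \<in> {1..N} \<Longrightarrow> y \<notin> hball n m (v j)"
    by (rule exists_template_outside_hballs[of "{1..N}" n m v])
       (use Suc.prems enrolments_templates[OF v(1)] in auto)
  have "\<not> (hamming (v j) y \<le> m \<or> hamming y (v j) \<le> m)" if "j \<in> {1..N}" for j
  proof -
    have "v j \<in> templates n"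
      using v(1) that by (rule enrolments_templates)
    then have "hamming y (v j) = hamming (v j) y"
      using y by (simp add: hamming_commute templates_def)
    then show ?thesis
      using y that by (simp add: hball_def)
  qed
  then have "v(Suc N := y) \<in> separated n (Suc N) m"
    using v y W0_extend[of N m v y] by (auto simp: separated_def enrolments_def PiE_def extensional_def)
  then show ?case
    by blast
qed

section \<open>From single attacks to the median number of rounds\<close>

lemma one_minus_prod_bounds:
  fixes p :: "'a \<Rightarrow> real"
  assumes "finite K" "\<And>k. k \<in> K \<Longrightarrow> q \<le> p k \<and> p k \<le> Q" "0 \<le> q" "q \<le> Q" "Q < 1"
  shows one_minus_prod_ge: "real (card K) * q / (1 + real (card K) * q) \<le> 1 - (\<Prod>k\<in>K. 1 - p k)"
    and one_minus_prod_le: "1 - (\<Prod>k\<in>K. 1 - p k) \<le> real (card K) * Q"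
    and one_minus_prod_less_one: "1 - (\<Prod>k\<in>K. 1 - p k) < 1"
proof -
  have upper: "(\<Prod>k\<in>K. 1 - p k) \<le> (1 - q) ^ card K"
    using assms prod_mono[of K "\<lambda>k. 1 - p k" "\<lambda>_. 1 - q"] by force
  have lower: "(1 - Q) ^ card K \<le> (\<Prod>k\<in>K. 1 - p k)"
    using assms prod_mono[of K "\<lambda>_. 1 - Q" "\<lambda>k. 1 - p k"] by force
  show "1 - (\<Prod>k\<in>K. 1 - p k) < 1"
    using lower assms(5) zero_less_power[of "1 - Q" "card K"] by linarith
  show "1 - (\<Prod>k\<in>K. 1 - p k) \<le> real (card K) * Q"
    using lower Bernoulli_inequality[of "- Q" "card K"] assms(5) by simp
  \<comment> \<open>\<open>(1 - q)^c \<le> 1 / (1 + c q)\<close>, since \<open>(1 - q)^c (1 + q)^c = (1 - q\<^sup>2)^c \<le> 1\<close>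
    and \<open>1 + c q \<le> (1 + q)^c\<close> by Bernoulli's inequality.\<close>
  have "(1 - q) ^ card K * (1 + real (card K) * q) \<le> (1 - q) ^ card K * (1 + q) ^ card K"
    using Bernoulli_inequality[of q "card K"] assms by (intro mult_left_mono) auto
  also have "\<dots> = (1 - q\<^sup>2) ^ card K"
    by (simp add: power2_eq_square algebra_simps flip: power_mult_distrib)
  also have "\<dots> \<le> 1"
    using assms by (intro power_le_one) (auto simp: power2_eq_square mult_le_one)
  finally have "(1 - q) ^ card K \<le> 1 / (1 + real (card K) * q)"
    using assms by (simp add: le_divide_eq add_pos_nonneg)
  moreover have "1 - real (card K) * q / (1 + real (card K) * q) = 1 / (1 + real (card K) * q)"
  proof -
    have "0 < 1 + real (card K) * q"
      using assms by (simp add: add_pos_nonneg)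
    then show ?thesis
      by (simp add: field_simps)
  qed
  ultimately show "real (card K) * q / (1 + real (card K) * q) \<le> 1 - (\<Prod>k\<in>K. 1 - p k)"
    using upper by linarith
qed

lemma ln_2_ge_half: "1 / 2 \<le> ln (2 :: real)"
  using ln_le_minus_one[of "1 / 2 :: real"] by (simp add: ln_div)

lemma geometric_median_ge:
  assumes "0 < P" "P < 1"
  shows "1 / (4 * P) \<le> real_of_int \<lceil>- ln 2 / ln (1 - P)\<rceil>"
proof -
  define L where "L = - ln (1 - P)"
  have L: "0 < L" "- ln 2 / ln (1 - P) = ln 2 / L"
    using assms by (simp_all add: L_def)
  then have ceiling_ge_1: "1 \<le> real_of_int \<lceil>ln 2 / L\<rceil>"
    by (simp add: zero_less_ceiling)
  show ?thesis
  proof (cases "P \<le> 1 / 2")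
    case True
    have "L \<le> P + 2 * P\<^sup>2"
      using ln_one_minus_pos_lower_bound[of P] assms True by (simp add: L_def)
    also have "\<dots> \<le> 2 * P"
      using assms True by (simp add: power2_eq_square mult_right_mono)
    finally have "L \<le> 2 * P" .
    have "1 / (4 * P) = (1 / 2) / (2 * P)"
      by simp
    also have "\<dots> \<le> ln 2 / L"
      using \<open>L \<le> 2 * P\<close> L(1) ln_2_ge_half by (intro frac_le) auto
    also have "\<dots> \<le> real_of_int \<lceil>ln 2 / L\<rceil>"
      by (rule le_of_int_ceiling)
    finally show ?thesis
      unfolding L .
  next
    case False
    then have "1 / (4 * P) \<le> 1"
      by (simp add: field_simps)
    then show ?thesis
      unfolding L(2) using ceiling_ge_1 by linarith
  qed
qed

lemma geometric_median_le:
  assumes "0 < P" "P < 1"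
  shows "real_of_int \<lceil>- ln 2 / ln (1 - P)\<rceil> \<le> 1 + 1 / P"
proof -
  have "P \<le> - ln (1 - P)"
    using ln_add_one_self_le_self2[of "- P"] assms by simp
  then have "ln 2 / - ln (1 - P) \<le> 1 / P"
    using assms ln_2_less_1 by (intro frac_le) auto
  then show ?thesis
    using of_int_ceiling_le_add_one[of "- ln 2 / ln (1 - P)"] by simp
qed

section \<open>The parameter regime of the corollary\<close>

locale bounded_population =
  fixes n N m :: nat and \<alpha> :: real
  assumes two_le_n: "2 \<le> n" and two_le_N: "2 \<le> N" and one_le_m: "1 \<le> m"
    and m_div_n_le: "real m / real n \<le> 1 / 2"
    and N_bound: "real N \<le> 2 + 2 powr (- real m)
              * ((1 - real m / real n) / (real m / real n)) ^ nat \<lceil>(real m + 1) / 2\<rceil>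
              * (1 / sqrt (8 * real m * (1 - real m / real n)) - 2 powr (- real n * \<alpha>))"
begin

text \<open>Here \<open>m\<close> is \<open>\<epsilon>\<close>. In terms of the quantities below the hypothesis on \<open>N\<close> reads
  \<open>N \<le> 2 + A (1/s - 1/t)\<close>, and \<open>Q\<close> is the union bound for the success probability of a
  single attacker.\<close>

definition \<kappa> :: nat where "\<kappa> = (m + 2) div 2"
definition odds :: real where "odds = real (n - m) / real m"
definition A :: real where "A = odds ^ \<kappa> / 2 ^ m"
definition s :: real where "s = sqrt (8 * real m * (1 - real m / real n))"
definition t :: real where "t = 2 powr (real n * \<alpha>)"
definition V :: real where "V = real (ball_volume n m)"
definition Q :: real where "Q = (real N - 1) * V / 2 ^ n"

lemma two_m_le_n: "2 * m \<le> n"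
proof -
  have "real (2 * m) \<le> real n"
    using m_div_n_le two_le_n by (simp add: field_simps)
  then show ?thesis
    by linarith
qed

lemma m_less_n: "m < n"
  using two_m_le_n one_le_m by simp

lemma \<kappa>: "1 \<le> \<kappa>" "\<kappa> \<le> m" "2 * \<kappa> \<le> m + 2"
  using one_le_m by (auto simp: \<kappa>_def)

lemma odds_ge_1: "1 \<le> odds"
  using two_m_le_n one_le_m by (simp add: odds_def field_simps)

lemma A_pos: "0 < A"
  using odds_ge_1 by (simp add: A_def)

lemma V_ge_1: "1 \<le> V"
  using one_le_ball_volume[of n m] by (simp add: V_def)

lemma s_ge_2: "2 \<le> s"
proof -
  have "8 * 1 * (1 / 2) \<le> 8 * real m * (1 - real m / real n)"
    using one_le_m m_div_n_le by (intro mult_mono) auto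
  then show ?thesis
    unfolding s_def by (intro real_le_rsqrt) simp
qed

lemma N_bound_simplified: "real N \<le> 2 + A * (1 / s - 1 / t)"
proof -
  have "nat \<lceil>(real m + 1) / 2\<rceil> = \<kappa>"
  proof -
    have "m + 1 \<le> 2 * \<kappa>" "2 * \<kappa> \<le> m + 2"
      by (auto simp: \<kappa>_def)
    then have "real (m + 1) \<le> real (2 * \<kappa>)" "real (2 * \<kappa>) \<le> real (m + 2)"
      by (simp_all only: of_nat_le_iff)
    then have "\<lceil>(real m + 1) / 2\<rceil> = int \<kappa>"
      by (intro ceiling_unique) simp_all
    then show ?thesis
      by simp
  qed
  moreover have "(1 - real m / real n) / (real m / real n) = odds"
    using one_le_m m_less_n by (simp add: odds_def of_nat_diff field_simps)
  moreover have "2 powr (- real m) = 1 / 2 ^ m" "2 powr (- real n * \<alpha>) = 1 / t"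
    by (simp_all add: t_def powr_minus_divide powr_realpow)
  ultimately show ?thesis
    using N_bound by (simp add: A_def s_def mult.assoc)
qed

lemma s_le_t: "s \<le> t"
proof -
  have "0 \<le> A * (1 / s - 1 / t)"
    using N_bound_simplified two_le_N by simp
  then have "1 / t \<le> 1 / s"
    using A_pos by (simp add: zero_le_mult_iff)
  then show ?thesis
    using s_ge_2 by (simp add: t_def divide_le_eq_1 field_simps)
qed

lemma N_minus_2_less: "real N - 2 < A / s"
proof -
  have "0 < A / t"
    using A_pos by (simp add: t_def)
  then show ?thesis
    using N_bound_simplified by (simp add: right_diff_distrib)
qed

lemma s_less_A_if_3_le_N:
  assumes "3 \<le> N"
  shows "s < A"
proof -
  have "1 \<le> real N - 2"
    using assms by simp
  then have "s \<le> (real N - 2) * s"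
    using s_ge_2 by (simp add: mult_le_cancel_right1)
  also have "\<dots> < A"
    using N_minus_2_less s_ge_2 by (simp add: field_simps)
  finally show ?thesis .
qed

lemma two_m_plus_\<kappa>_less_n:
  assumes "1 < A"
  shows "2 * m + \<kappa> < n"
proof (rule ccontr)
  assume "\<not> 2 * m + \<kappa> < n"
  then have "real (n - m) \<le> 2 * real m"
    using \<kappa> by simp
  then have "odds \<le> 2"
    using one_le_m by (simp add: odds_def field_simps)
  then have "odds ^ \<kappa> \<le> 2 ^ \<kappa>"
    using odds_ge_1 by (intro power_mono) auto
  also have "\<dots> \<le> 2 ^ m"
    using \<kappa> by (intro power_increasing) auto
  finally have "odds ^ \<kappa> \<le> 2 ^ m" .
  then show False
    using assms by (simp add: A_def)
qed

lemma Q_less_1: "Q < 1"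
proof (cases "N = 2")
  case True
  then show ?thesis
    unfolding Q_def V_def using ball_volume_less_power[OF m_less_n]
    by (simp add: of_nat_less_numeral_power_cancel_iff)
next
  case False
  then have "s < A"
    using two_le_N s_less_A_if_3_le_N by simp
  then have "2 * m + \<kappa> < n"
    using s_ge_2 by (intro two_m_plus_\<kappa>_less_n) simp
  have "(real N - 1) * V < (1 + A / s) * V"
    using N_minus_2_less V_ge_1 by (intro mult_strict_right_mono) auto
  also have "\<dots> \<le> (1 + A / 2) * V"
    using A_pos s_ge_2 V_ge_1 by (intro mult_right_mono add_left_mono divide_left_mono) auto
  also have "\<dots> \<le> 2 ^ n"
    using ball_volume_scaled_le[OF \<kappa> \<open>2 * m + \<kappa> < n\<close>] by (simp add: A_def odds_def V_def)
  finally show ?thesis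
    by (simp add: Q_def)
qed

lemma Q_pos: "0 < Q"
  using two_le_N V_ge_1 by (simp add: Q_def)

lemma separated_ne: "separated n N m \<noteq> {}"
proof -
  have "real ((N - 1) * ball_volume n m) < real ((2 :: nat) ^ n)"
    using Q_less_1 two_le_N by (simp add: Q_def V_def of_nat_diff)
  then show ?thesis
    by (intro separated_nonempty) (simp only: of_nat_less_iff)
qed

lemma N_times_Q_le: "real N * Q \<le> 972"
proof (cases "N = 2")
  case True
  then show ?thesis
    using Q_less_1 by simp
next
  case False
  then have "s < A"
    using two_le_N s_less_A_if_3_le_N by simp
  have "A / s \<le> A / 2"
    using A_pos s_ge_2 by (intro divide_left_mono) auto
  then have "real N \<le> 3 / 2 * A" "real N - 1 \<le> A"
    using N_minus_2_less \<open>s < A\<close> s_ge_2 by linarith+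
  then have "real N * (real N - 1) * V \<le> 3 / 2 * A * A * V"
    using two_le_N V_ge_1 by (intro mult_right_mono mult_mono) auto
  also have "\<dots> = 3 / 2 * (A\<^sup>2 * V)"
    by (simp add: power2_eq_square)
  also have "\<dots> \<le> 3 / 2 * (648 * 2 ^ n)"
    using ball_volume_square_scaled_le[OF one_le_m two_m_le_n \<kappa>(3)]
    unfolding A_def odds_def V_def by (simp add: mult.commute)
  finally show ?thesis
    by (simp add: Q_def field_simps)
qed

lemma odds_ge_4_if_4_le_N:
  assumes "4 \<le> N"
  shows "4 \<le> odds"
proof (rule ccontr)
  assume "\<not> 4 \<le> odds"
  have "2 * s \<le> (real N - 2) * s"
    using assms s_ge_2 by (intro mult_right_mono) auto
  also have "\<dots> < A"
    using N_minus_2_less s_ge_2 by (simp add: field_simps)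
  finally have "4 < A"
    using s_ge_2 by simp
  have "odds ^ \<kappa> < 4 ^ \<kappa>"
    using \<open>\<not> 4 \<le> odds\<close> odds_ge_1 \<kappa> by (intro power_strict_mono) auto
  also have "\<dots> = 2 ^ (2 * \<kappa>)"
    by (simp add: power_mult)
  also have "\<dots> \<le> 2 ^ (m + 2)"
    using \<kappa> by (intro power_increasing) auto
  finally have "A < 4"
    by (simp add: A_def power_add field_simps)
  then show False
    using \<open>4 < A\<close> by simp
qed

text \<open>Far apart balls overlap in at most a fraction \<open>(4 m / (n - m))^\<kappa>\<close> of their volume,
  which the hypothesis on \<open>N\<close> makes small compared to \<open>1 / N\<close>.\<close>
lemma overlap_fraction_le:
  assumes "4 \<le> N"
  shows "(real N - 2) * (4 * (real m / real (n - m))) ^ \<kappa> / 2 \<le> 4 / 5"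
proof -
  define r where "r = real m / real (n - m)"
  have r: "0 < r" "odds * r = 1"
    using one_le_m m_less_n by (simp_all add: r_def odds_def)
  have "5 / 2 \<le> s"
  proof -
    have "4 * real m \<le> real (n - m)"
      using odds_ge_4_if_4_le_N[OF assms] one_le_m by (simp add: odds_def field_simps)
    then have "real m / real n \<le> 1 / 5"
      using m_less_n by (simp add: of_nat_diff field_simps)
    then have "(5 / 2)\<^sup>2 \<le> 8 * real m * (1 - real m / real n)"
      using one_le_m mult_mono[of 1 "real m" "4 / 5" "1 - real m / real n"]
      by (simp add: power2_eq_square)
    then show ?thesis
      unfolding s_def by (rule real_le_rsqrt)
  qed
  have "A * (4 * r) ^ \<kappa> = (odds * r) ^ \<kappa> * 4 ^ \<kappa> / 2 ^ m"
    by (simp add: A_def power_mult_distrib)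
  also have "\<dots> = 2 ^ (2 * \<kappa>) / 2 ^ m"
    using r by (simp add: power_mult)
  also have "\<dots> \<le> 2 ^ (m + 2) / 2 ^ m"
    using \<kappa> by (intro divide_right_mono power_increasing) auto
  finally have "A * (4 * r) ^ \<kappa> \<le> 4"
    by (simp add: power_add)
  have "(real N - 2) * (4 * r) ^ \<kappa> \<le> A / s * (4 * r) ^ \<kappa>"
    using N_minus_2_less r by (intro mult_right_mono) auto
  also have "\<dots> \<le> 4 / (5 / 2)"
    using \<open>A * (4 * r) ^ \<kappa> \<le> 4\<close> \<open>5 / 2 \<le> s\<close> s_ge_2 r
    by (simp add: field_simps)
  finally show ?thesis
    by (simp add: r_def)
qed

lemma card_others_cover_ge:
  assumes "v \<in> separated n N m" "k \<in> {1..N}"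
  shows "(real N - 1) * V / 5 \<le> real (card (others_cover n N m k v))"
proof (cases "N \<le> 3")
  case True
  have "V \<le> real (card (others_cover n N m k v))"
    using ball_volume_le_card_others_cover[OF _ assms(2) two_le_N] assms(1)
    by (simp add: V_def separated_def)
  moreover have "(real N - 1) * V \<le> 2 * V"
    using True V_ge_1 by (intro mult_right_mono) auto
  ultimately show ?thesis
    by simp
next
  case False
  define I where "I = (4 * (real m / real (n - m))) ^ \<kappa> * V"
  have "4 * (real m / real (n - m)) \<le> 1"
    using odds_ge_4_if_4_le_N False one_le_m m_less_n by (simp add: odds_def field_simps)
  then have "(real N - 1) * V - (real N - 1) * (real N - 2) / 2 * I
      \<le> real (card (others_cover n N m k v))"
    using card_hball_inter_le_far[OF two_m_le_n] unfolding V_def I_def \<kappa>_def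
    by (intro card_others_cover_ge_Bonferroni[OF assms]) auto
  moreover have "(real N - 1) * V / 5 \<le> (real N - 1) * V - (real N - 1) * (real N - 2) / 2 * I"
  proof -
    have "(real N - 1) * V * ((real N - 2) * (4 * (real m / real (n - m))) ^ \<kappa> / 2)
        \<le> (real N - 1) * V * (4 / 5)"
      using overlap_fraction_le False two_le_N V_ge_1 by (intro mult_left_mono) auto
    moreover have "(real N - 1) * (real N - 2) / 2 * I
        = (real N - 1) * V * ((real N - 2) * (4 * (real m / real (n - m))) ^ \<kappa> / 2)"
      by (simp add: I_def field_simps)
    ultimately show ?thesis
      by linarith
  qed
  ultimately show ?thesis
    by linarith
qed

lemma p_att_bounds:
  assumes "k \<in> {1..N}"
  shows "Q / 5 \<le> p_att n N m k" "p_att n N m k \<le> Q"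
proof -
  define S where "S = separated n N m"
  have "S \<noteq> {}" "finite S"
    using separated_ne finite_enrolments by (simp_all add: S_def separated_def)
  then have S: "0 < real (card S)"
    by (simp add: card_gt_0_iff)
  have p: "p_att n N m k = (\<Sum>v\<in>S. real (card (others_cover n N m k v))) / (real (card S) * 2 ^ n)"
    by (simp add: p_att_eq_average S_def)
  have "real (card S) * ((real N - 1) * V / 5) \<le> (\<Sum>v\<in>S. real (card (others_cover n N m k v)))"
    using card_others_cover_ge assms by (intro sum_bounded_below) (simp add: S_def)
  then have "real (card S) * ((real N - 1) * V / 5) / (real (card S) * 2 ^ n) \<le> p_att n N m k"
    unfolding p by (rule divide_right_mono) simp
  moreover have "real (card S) * ((real N - 1) * V / 5) / (real (card S) * 2 ^ n) = Q / 5"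
    using S by (simp add: Q_def)
  ultimately show "Q / 5 \<le> p_att n N m k"
    by simp
  have "(\<Sum>v\<in>S. real (card (others_cover n N m k v))) \<le> real (card S) * ((real N - 1) * V)"
  proof (rule sum_bounded_above)
    fix v assume "v \<in> S"
    then have "card (others_cover n N m k v) \<le> (N - 1) * ball_volume n m"
      using assms by (intro card_others_cover_le) (simp_all add: S_def separated_def)
    then have "real (card (others_cover n N m k v)) \<le> real ((N - 1) * ball_volume n m)"
      by (simp only: of_nat_le_iff)
    then show "real (card (others_cover n N m k v)) \<le> (real N - 1) * V"
      using two_le_N by (simp add: V_def of_nat_diff)
  qed
  then have "p_att n N m k \<le> real (card S) * ((real N - 1) * V) / (real (card S) * 2 ^ n)"
    unfolding p by (rule divide_right_mono) simp
  also have "\<dots> = Q"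
    using S by (simp add: Q_def)
  finally show "p_att n N m k \<le> Q" .
qed

lemma p_w_bounds:
  assumes "1 \<le> l" "l \<le> N"
  shows "real l * (Q / 5) / (1 + real l * (Q / 5)) \<le> p_w n N m l"
    and "p_w n N m l \<le> real l * Q"
    and "p_w n N m l < 1"
proof -
  have "q \<in> {1..l} \<Longrightarrow> Q / 5 \<le> p_att n N m q \<and> p_att n N m q \<le> Q" for q
    using p_att_bounds[of q] assms by auto
  then show "real l * (Q / 5) / (1 + real l * (Q / 5)) \<le> p_w n N m l"
    and "p_w n N m l \<le> real l * Q"
    and "p_w n N m l < 1"
    using one_minus_prod_bounds[of "{1..l}" "Q / 5" "p_att n N m" Q] Q_pos Q_less_1
    by (simp_all add: p_w_def)
qed

lemma m_in_ge:
  assumes "1 \<le> l" "l \<le> N"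
  shows "1 / (4 * (real l * Q)) \<le> real_of_int (m_in n N m l)"
proof -
  have "0 < real l * (Q / 5) / (1 + real l * (Q / 5))"
    using assms Q_pos by (simp add: add_pos_pos)
  then have P: "0 < p_w n N m l" "p_w n N m l < 1"
    using p_w_bounds[OF assms] by linarith+
  have "1 / (4 * (real l * Q)) \<le> 1 / (4 * p_w n N m l)"
    using P p_w_bounds(2)[OF assms] Q_pos assms by (intro divide_left_mono) auto
  also have "\<dots> \<le> real_of_int (m_in n N m l)"
    unfolding m_in_def using P by (rule geometric_median_ge)
  finally show ?thesis .
qed

lemma m_in_le:
  assumes "1 \<le> l" "l \<le> N"
  shows "real_of_int (m_in n N m l) \<le> 1950 / (real l * Q)"
proof -
  define y where "y = real l * (Q / 5)"
  have "real l * Q \<le> real N * Q"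
    using assms Q_pos by (intro mult_right_mono) auto
  then have "y \<le> 972 / 5"
    using N_times_Q_le unfolding y_def by linarith
  moreover have "0 < y"
    using assms Q_pos by (simp add: y_def)
  ultimately have y: "0 < y" "y \<le> 972 / 5"
    by simp_all
  have "y / (1 + y) \<le> p_w n N m l"
    using p_w_bounds(1)[OF assms] by (simp add: y_def)
  moreover have "0 < y / (1 + y)"
    using y by simp
  ultimately have P: "0 < p_w n N m l" "p_w n N m l < 1" "y / (1 + y) \<le> p_w n N m l"
    using p_w_bounds(3)[OF assms] by simp_all
  have "real_of_int (m_in n N m l) \<le> 1 + 1 / p_w n N m l"
    unfolding m_in_def using P(1,2) by (rule geometric_median_le)
  also have "\<dots> \<le> 1 + (1 + y) / y"
    using P y by (simp add: field_simps)
  also have "\<dots> = 2 + 1 / y"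
    using y by (simp add: field_simps)
  also have "\<dots> \<le> 1949 / (5 * y)"
    using y by (simp add: field_simps)
  also have "\<dots> \<le> 1950 / (real l * Q)"
    using y by (simp add: y_def divide_right_mono)
  finally show ?thesis .
qed

lemma entropy_volume_le: "entropy_volume n m \<le> 4 * t * V"
proof -
  have "entropy_volume n m \<le> 4 * s * real (n choose m)"
    using entropy_volume_le_binomial[of m n] one_le_m two_m_le_n by (simp add: s_def)
  also have "\<dots> \<le> 4 * t * V"
    using s_le_t s_ge_2 binomial_le_ball_volume[of n m] V_ge_1
    by (intro mult_mono) (auto simp: V_def)
  finally show ?thesis .
qed

lemma m_in_ge_entropy_volume:
  assumes "1 \<le> l" "l \<le> N"
  shows "1 / 4 * (2 ^ n / (entropy_volume n m * real N ^ 2 * real l)) \<le> real_of_int (m_in n N m l)"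
proof -
  have "real N * 1 \<le> real N * real N"
    using two_le_N by (intro mult_left_mono) auto
  then have "real N - 1 \<le> real N ^ 2"
    by (simp only: power2_eq_square)
  then have "(real N - 1) * V \<le> real N ^ 2 * entropy_volume n m"
    using ball_volume_le_entropy_volume[of m n] one_le_m two_m_le_n two_le_N V_ge_1
    by (intro mult_mono) (auto simp: V_def)
  then have "real l * Q \<le> real l * (real N ^ 2 * entropy_volume n m) / 2 ^ n"
    using assms by (simp add: Q_def divide_right_mono)
  then have "1 / (4 * (real l * (real N ^ 2 * entropy_volume n m) / 2 ^ n)) \<le> 1 / (4 * (real l * Q))"
    using assms Q_pos two_le_N by (intro divide_left_mono) (auto simp: entropy_volume_def)
  also have "\<dots> \<le> real_of_int (m_in n N m l)"
    by (rule m_in_ge[OF assms])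
  finally show ?thesis
    by (simp add: field_simps)
qed

lemma m_in_le_entropy_volume:
  assumes "1 \<le> l" "l \<le> N"
  shows "real_of_int (m_in n N m l) \<le> 15600 * (2 ^ n * t / (entropy_volume n m * real N * real l))"
proof -
  define H where "H = entropy_volume n m"
  have pos: "0 < H" "0 < real l" "0 < t" "0 < real N - 1"
    using two_le_N assms by (simp_all add: H_def entropy_volume_def t_def)
  have "H * real N \<le> 4 * t * V * (2 * (real N - 1))"
    using entropy_volume_le pos two_le_N V_ge_1 by (intro mult_mono) (auto simp: H_def)
  also have "\<dots> = 8 * t * ((real N - 1) * V)"
    by (simp add: algebra_simps)
  finally have "real l * (H * real N) \<le> real l * (8 * t * ((real N - 1) * V))"
    using pos by (intro mult_left_mono) auto
  moreover have "1950 / (real l * Q) = 15600 * 2 ^ n * t / (real l * (8 * t * ((real N - 1) * V)))"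
    using pos by (simp add: Q_def)
  ultimately have "1950 / (real l * Q) \<le> 15600 * 2 ^ n * t / (real l * (H * real N))"
    using pos V_ge_1 by (simp only:) (intro divide_left_mono, auto)
  then show ?thesis
    using m_in_le[OF assms] by (simp add: H_def mult_ac)
qed

lemma m_in_bounds:
  assumes "1 \<le> l" "l \<le> N"
  shows "1 / 4 * 2 powr (real n * (1 - bin_entropy (real m / real n))
                        - 2 * log 2 (real N) - log 2 (real l))
           \<le> real_of_int (m_in n N m l)
       \<and> real_of_int (m_in n N m l)
           \<le> 15600 * 2 powr (real n * (1 - bin_entropy (real m / real n) + \<alpha>)
                              - log 2 (real N) - log 2 (real l))"
  using m_in_ge_entropy_volume[OF assms] m_in_le_entropy_volume[OF assms] two_le_N assms
  by (simp add: powr_entropy_lower_eq powr_entropy_upper_eq t_def)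

end

theorem corollary4p12:
  "\<exists>c C :: real. c > 0 \<and> C > 0 \<and>
    (\<forall>(n::nat) (N::nat) (eps::nat) (\<alpha>::real) (l::nat).
       2 \<le> n \<longrightarrow> 2 \<le> N \<longrightarrow> 1 \<le> eps \<longrightarrow>
       real eps / real n \<le> 1/2 \<longrightarrow>
       \<alpha> < bin_entropy (real eps / real n) \<longrightarrow>
       real N \<le> 2 + 2 powr (- real eps)
              * ((1 - real eps / real n) / (real eps / real n))
                  ^ nat \<lceil>(real eps + 1) / 2\<rceil>
              * (1 / sqrt (8 * real eps * (1 - real eps / real n))
                 - 2 powr (- real n * \<alpha>)) \<longrightarrow>
       1 \<le> l \<longrightarrow> l \<le> N \<longrightarrow>
         c * 2 powr (real n * (1 - bin_entropy (real eps / real n))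
                     - 2 * log 2 (real N) - log 2 (real l))
           \<le> real_of_int (m_in n N eps l)
       \<and> real_of_int (m_in n N eps l)
           \<le> C * 2 powr (real n * (1 - bin_entropy (real eps / real n) + \<alpha>)
                         - log 2 (real N) - log 2 (real l)))"
  by (rule exI[of _ "1 / 4"], rule exI[of _ 15600], (rule conjI, simp)+, intro allI impI,
      rule bounded_population.m_in_bounds) (simp_all add: bounded_population_def)

end
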